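(* Let $(A,\leq,\cdot,/)$ be a unital narhoop with distinguished left identity $1$. Then: (1) $1$ is the top element of $(A,\leq)$ if and only if $\sqcap$ is commutative on $A$; (2) the principal ideal $(1]=\{x\in A\mid x\leq 1\}$ is closed under $\cdot$ and $/$ (hence is a subnarhoop), and $((1],\sqcap)$ is a semilattice.
   Context: Write $xy$ for $x\cdot y$; $\cdot$ binds more strongly than $/$, and $/$ binds more strongly than $\sqcap$, where $x\sqcap y := (x/y)y$. A right-residuated magma is a structure $(A,\leq,\cdot,/)$ where $(A,\leq)$ is a poset and $xy\leq z\iff x\leq z/y$ for all $x,y,z\in A$. A narhoop is a right-residuated magma such that for all $x,y$: $x\leq y\iff x\sqcap y = x = y\sqcap x$. A narhoop is unital if $x/x=y/y$ for all $x,y\in A$ (equivalently, $A$ has a left identity element); then $1$ denotes the common value $x/x$, which is a left identity element. A subnarhoop is a subset closed under $\cdot$ and $/$. *)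

theory Defs
  imports Main
begin

text \<open>A structure (A, le, m, r) with carrier the whole type 'a; m is the product x y,
  r is the right residual x / y.\<close>

definition right_residuated_magma ::
  "('a \<Rightarrow> 'a \<Rightarrow> bool) \<Rightarrow> ('a \<Rightarrow> 'a \<Rightarrow> 'a) \<Rightarrow> ('a \<Rightarrow> 'a \<Rightarrow> 'a) \<Rightarrow> bool" where
  "right_residuated_magma le m r \<longleftrightarrow>
     (\<forall>x. le x x) \<and>
     (\<forall>x y z. le x y \<longrightarrow> le y z \<longrightarrow> le x z) \<and>
     (\<forall>x y. le x y \<longrightarrow> le y x \<longrightarrow> x = y) \<and>
     (\<forall>x y z. le (m x y) z \<longleftrightarrow> le x (r z y))"

definition nmeet :: "('a \<Rightarrow> 'a \<Rightarrow> 'a) \<Rightarrow> ('a \<Rightarrow> 'a \<Rightarrow> 'a) \<Rightarrow> 'a \<Rightarrow> 'a \<Rightarrow> 'a" where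
  "nmeet m r x y = m (r x y) y"

definition narhoop ::
  "('a \<Rightarrow> 'a \<Rightarrow> bool) \<Rightarrow> ('a \<Rightarrow> 'a \<Rightarrow> 'a) \<Rightarrow> ('a \<Rightarrow> 'a \<Rightarrow> 'a) \<Rightarrow> bool" where
  "narhoop le m r \<longleftrightarrow> right_residuated_magma le m r \<and>
     (\<forall>x y. le x y \<longleftrightarrow> (nmeet m r x y = x \<and> nmeet m r y x = x))"

definition unital :: "('a \<Rightarrow> 'a \<Rightarrow> 'a) \<Rightarrow> bool" where
  "unital r \<longleftrightarrow> (\<forall>x y. r x x = r y y)"

text \<open>The common value x / x (meaningful when unital).\<close>
definition nunit :: "('a \<Rightarrow> 'a \<Rightarrow> 'a) \<Rightarrow> 'a" where
  "nunit r = r undefined undefined"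

definition semilattice_on :: "'a set \<Rightarrow> ('a \<Rightarrow> 'a \<Rightarrow> 'a) \<Rightarrow> bool" where
  "semilattice_on S f \<longleftrightarrow>
     (\<forall>x\<in>S. \<forall>y\<in>S. f x y \<in> S) \<and>
     (\<forall>x\<in>S. \<forall>y\<in>S. \<forall>z\<in>S. f (f x y) z = f x (f y z)) \<and>
     (\<forall>x\<in>S. \<forall>y\<in>S. f x y = f y x) \<and>
     (\<forall>x\<in>S. f x x = x)"

end

theory Submission
  imports Defs
begin

text \<open>In a narhoop, \<open>x \<sqinter> y\<close> is always a lower bound of \<open>x\<close> and lies below every common
  lower bound of \<open>x\<close> and \<open>y\<close>; by residuation it lies below \<open>y\<close> exactly when
  \<open>x / y \<le> y / y = 1\<close>. Hence \<open>\<sqinter>\<close> is the meet of \<open>x\<close> and \<open>y\<close> whenever \<open>x / y \<le> 1\<close>. If \<open>1\<close> is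
  the top element this holds everywhere, so \<open>\<sqinter>\<close> is commutative; conversely commutativity
  gives \<open>x / y \<le> 1\<close> for all \<open>x, y\<close>, and \<open>x \<le> (x 1) / 1 \<le> 1\<close>. Below \<open>1\<close>, monotonicity and
  \<open>1 y = y\<close> give closure under \<open>\<cdot>\<close> and \<open>/\<close>, and in particular \<open>x / y \<le> 1\<close>, so on \<open>(1]\<close> the
  operation \<open>\<sqinter>\<close> is a genuine meet and thus a semilattice operation.\<close>

locale narhoop_alg =
  fixes le :: "'a \<Rightarrow> 'a \<Rightarrow> bool" and m r :: "'a \<Rightarrow> 'a \<Rightarrow> 'a"
  assumes narhoop: "narhoop le m r"
begin

abbreviation meet :: "'a \<Rightarrow> 'a \<Rightarrow> 'a" where "meet \<equiv> nmeet m r"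

lemma magma: "right_residuated_magma le m r"
  using narhoop unfolding narhoop_def by blast

lemma refl: "le x x"
  and trans: "le x y \<Longrightarrow> le y z \<Longrightarrow> le x z"
  and antisym: "le x y \<Longrightarrow> le y x \<Longrightarrow> x = y"
  and residuation: "le (m x y) z \<longleftrightarrow> le x (r z y)"
  using magma unfolding right_residuated_magma_def by blast+

lemma indirect_eq: "(\<And>z. le z a \<longleftrightarrow> le z b) \<Longrightarrow> a = b"
  using refl antisym by blast

lemma le_iff_meet: "le x y \<longleftrightarrow> meet x y = x \<and> meet y x = x"
  using narhoop unfolding narhoop_def by blast

lemma meet_idem: "meet x x = x"
  using le_iff_meet refl by blast

lemma mult_mono_left: "le x x' \<Longrightarrow> le (m x y) (m x' y)"
  using residuation refl trans by meson

lemma residual_mono_left: "le z z' \<Longrightarrow> le (r z y) (r z' y)"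
  using residuation refl trans by meson

lemma meet_lower_left: "le (meet x y) x"
  unfolding nmeet_def using residuation refl by blast

lemma meet_lower_right_iff: "le (meet x y) y \<longleftrightarrow> le (r x y) (r y y)"
  unfolding nmeet_def using residuation by blast

lemma meet_greatest:
  assumes "le z x" and "le z y"
  shows "le z (meet x y)"
proof -
  have "meet z y = z"
    using le_iff_meet assms(2) by blast
  moreover have "le (meet z y) (meet x y)"
    unfolding nmeet_def using assms(1) by (intro mult_mono_left residual_mono_left)
  ultimately show ?thesis
    by simp
qed

lemma le_meet_iff:
  assumes "le (r x y) (r y y)"
  shows "le z (meet x y) \<longleftrightarrow> le z x \<and> le z y"
  using assms meet_greatest meet_lower_left meet_lower_right_iff trans by blast

lemma meet_commute_if_residuals_le:
  assumes "le (r x y) (r y y)" and "le (r y x) (r x x)"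
  shows "meet x y = meet y x"
  by (rule indirect_eq) (simp add: le_meet_iff assms conj_commute)

end

locale unital_narhoop_alg = narhoop_alg +
  assumes unital: "unital r"
begin

abbreviation one :: 'a where "one \<equiv> nunit r"

lemma residual_self: "r x x = one"
  using unital unfolding unital_def nunit_def by metis

lemma one_mult: "m one x = x"
  using meet_idem[of x] unfolding nmeet_def residual_self .

lemma residual_one_le: "le y one \<Longrightarrow> le (r one y) one"
  using le_iff_meet meet_lower_right_iff residual_self refl by metis

lemma mult_closed: "le x one \<Longrightarrow> le y one \<Longrightarrow> le (m x y) one"
  using mult_mono_left[of x one y] one_mult trans by metis

lemma residual_closed: "le x one \<Longrightarrow> le y one \<Longrightarrow> le (r x y) one"
  using residual_mono_left residual_one_le trans by blast

lemma le_meet_iff_one: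
  "le (r x y) one \<Longrightarrow> le z (meet x y) \<longleftrightarrow> le z x \<and> le z y"
  using le_meet_iff residual_self by metis

lemma top_iff_meet_commute:
  "(\<forall>x. le x one) \<longleftrightarrow> (\<forall>x y. meet x y = meet y x)"
proof
  assume "\<forall>x. le x one"
  then show "\<forall>x y. meet x y = meet y x"
    using meet_commute_if_residuals_le residual_self by metis
next
  assume commute: "\<forall>x y. meet x y = meet y x"
  have residual_le_one: "le (r x y) one" for x y
    using meet_lower_left[of y x] commute meet_lower_right_iff residual_self by metis
  show "\<forall>x. le x one"
  proof
    fix x
    have "le x (r (m x one) one)"
      using residuation refl by blast
    then show "le x one"
      using residual_le_one trans by blast
  qed
qed

lemma semilattice_on_principal_ideal: "semilattice_on {x. le x one} meet"
proof -
  have le_meet: "le z (meet x y) \<longleftrightarrow> le z x \<and> le z y" if "le x one" "le y one" for x y z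
    using that le_meet_iff_one residual_closed by blast
  have closed: "le (meet x y) one" if "le x one" for x y
    using that meet_lower_left trans by blast
  have "meet x y = meet y x" if "le x one" "le y one" for x y
    by (rule indirect_eq) (simp add: le_meet that conj_commute)
  moreover have "meet (meet x y) z = meet x (meet y z)"
    if "le x one" "le y one" "le z one" for x y z
    by (rule indirect_eq) (simp add: le_meet closed that conj_assoc)
  ultimately show ?thesis
    unfolding semilattice_on_def using closed meet_idem by simp
qed

end

theorem mainTheorem10:
  fixes le :: "'a \<Rightarrow> 'a \<Rightarrow> bool" and m r :: "'a \<Rightarrow> 'a \<Rightarrow> 'a"
  assumes "narhoop le m r" and "unital r"
  shows "((\<forall>x. le x (nunit r)) \<longleftrightarrow> (\<forall>x y. nmeet m r x y = nmeet m r y x))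
         \<and> (\<forall>x y. le x (nunit r) \<and> le y (nunit r) \<longrightarrow>
           le (m x y) (nunit r) \<and> le (r x y) (nunit r))
         \<and> semilattice_on {x. le x (nunit r)} (nmeet m r)"
proof -
  interpret unital_narhoop_alg le m r
    using assms by unfold_locales
  show ?thesis
    using top_iff_meet_commute mult_closed residual_closed semilattice_on_principal_ideal
    by blast
qed

end
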